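(* Let $m,m',\ell\in\mathbb{N}$. Let $x\in\mathbb{R}^m$ and $x'\in\mathbb{R}^{m'}$ be two time series with $\mathrm{set}(x)=\mathrm{set}(x')$ and with the same set of $\ell$-profiles, i.e. $D_{(x,\ell)}=D_{(x',\ell)}$. Then for every $y\in\mathbb{R}^\ell$ we have $d_{dF}(x,y)=d_{dF}(x',y)$.
   Context: A time series of complexity $m$ is a vector $x=(x_1,\dots,x_m)\in\mathbb{R}^m$; $\mathrm{set}(x)=\{x_i: 1\le i\le m\}$, and for $z\in\mathrm{set}(x)$, $\mathrm{rank}_x(z)$ is the rank of $z$ in $\mathrm{set}(x)$ (ordered increasingly). For $x\in\mathbb{R}^m$ and $y\in\mathbb{R}^\ell$, a traversal is a sequence of index pairs $(i,j)\in[m]\times[\ell]$ starting at $(1,1)$, ending at $(m,\ell)$, in which each pair $(i,j)$ is followed by one of $(i,j+1)$, $(i+1,j)$, $(i+1,j+1)$; $x_i$ and $y_j$ are matched if $(i,j)$ occurs in it. The discrete Fréchet distance $d_{dF}(x,y)$ is the minimum over all traversals $T$ of $\max_{(i,j)\in T}|x_i-y_j|$. For a traversal $M$ of $x$ with a time series of complexity $\ell$, the traversal sectors are $S^{(x,M)}_j=\{x_i: i\in[m],\ x_i \text{ and } y_j \text{ matched by } M\}$ for $j\in[\ell]$, and the $\ell$-profile of $(x,M)$ is the sequence $\big((\mathrm{rank}_x(\min S^{(x,M)}_1),\mathrm{rank}_x(\max S^{(x,M)}_1)),\dots,(\mathrm{rank}_x(\min S^{(x,M)}_\ell),\mathrm{rank}_x(\max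 S^{(x,M)}_\ell))\big)$. $D_{(x,\ell)}$ denotes the set of all $\ell$-profiles of $(x,M)$ over all traversals $M$ between time series of complexity $m$ and time series of complexity $\ell$. *)

theory Defs
  imports Complex_Main
begin

text \<open>Time series are lists of reals; positions are 0-based (paper index i corresponds
to list position i-1).\<close>

definition traversal :: "nat \<Rightarrow> nat \<Rightarrow> (nat \<times> nat) list \<Rightarrow> bool" where
  "traversal m l T \<longleftrightarrow>
     T \<noteq> [] \<and> hd T = (0, 0) \<and> last T = (m - 1, l - 1) \<and>
     (\<forall>(i, j) \<in> set T. i < m \<and> j < l) \<and>
     (\<forall>k. Suc k < length T \<longrightarrow>
        (let (i, j) = T ! k; p = T ! Suc k in
           p = (i, Suc j) \<or> p = (Suc i, j) \<or> p = (Suc i, Suc j)))"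

definition dF :: "real list \<Rightarrow> real list \<Rightarrow> real" where
  "dF x y = Min {Max ((\<lambda>(i, j). \<bar>x ! i - y ! j\<bar>) ` set T) | T.
                  traversal (length x) (length y) T}"

definition rank :: "real list \<Rightarrow> real \<Rightarrow> nat" where
  "rank x z = card {w \<in> set x. w \<le> z}"

definition sector :: "real list \<Rightarrow> (nat \<times> nat) list \<Rightarrow> nat \<Rightarrow> real set" where
  "sector x M j = {x ! i | i. (i, j) \<in> set M}"

definition profile :: "real list \<Rightarrow> nat \<Rightarrow> (nat \<times> nat) list \<Rightarrow> (nat \<times> nat) list" where
  "profile x l M = map (\<lambda>j. (rank x (Min (sector x M j)), rank x (Max (sector x M j)))) [0..<l]"

definition profiles :: "real list \<Rightarrow> nat \<Rightarrow> (nat \<times> nat) list set" where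
  "profiles x l = {profile x l M | M. traversal (length x) l M}"

end

theory Submission
  imports Defs
begin

text \<open>The cost of a traversal is at most \<open>r\<close> iff for every \<open>j\<close> the whole sector of \<open>x\<close>
  matched with \<open>y\<^sub>j\<close> lies in the interval \<open>[y\<^sub>j - r, y\<^sub>j + r]\<close>. By convexity of the interval
  this only depends on the minimum and maximum of each sector, which the profile records
  up to ranks, and ranks in \<open>set x = set x'\<close> determine the values. Hence every traversal of
  \<open>x\<close> has a traversal of \<open>x'\<close> of the same cost and vice versa, so the minima agree.\<close>

lemma list_unit_steps_attain:
  fixes f :: "'a \<Rightarrow> nat"
  assumes "xs \<noteq> []"
    and "\<And>k. Suc k < length xs \<Longrightarrow> f (xs ! Suc k) \<le> Suc (f (xs ! k))"
    and "f (hd xs) \<le> j" and "j \<le> f (last xs)"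
  shows "\<exists>a\<in>set xs. f a = j"
  using assms
proof (induction xs)
  case Nil
  then show ?case by simp
next
  case (Cons a xs)
  show ?case
  proof (cases "f a = j")
    case True
    then show ?thesis by simp
  next
    case False
    with Cons.prems(3) have "f a < j" by simp
    with Cons.prems(4) have "xs \<noteq> []" by auto
    have "f (hd xs) \<le> Suc (f a)"
      using Cons.prems(2)[of 0] \<open>xs \<noteq> []\<close> by (simp add: hd_conv_nth)
    moreover have "\<And>k. Suc k < length xs \<Longrightarrow> f (xs ! Suc k) \<le> Suc (f (xs ! k))"
      using Cons.prems(2) by fastforce
    ultimately have "\<exists>b\<in>set xs. f b = j"
      using Cons.IH \<open>xs \<noteq> []\<close> \<open>f a < j\<close> Cons.prems(4) by simp
    then show ?thesis by simp
  qed
qed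

lemma traversal_in_bounds:
  assumes "traversal m l T" and "(i, j) \<in> set T"
  shows "i < m" and "j < l"
  using assms unfolding traversal_def by auto

lemma traversal_snd_step:
  assumes "traversal m l T" and "Suc k < length T"
  shows "snd (T ! Suc k) \<le> Suc (snd (T ! k))"
proof -
  obtain i j where "T ! k = (i, j)" by fastforce
  with assms have "T ! Suc k \<in> {(i, Suc j), (Suc i, j), (Suc i, Suc j)}"
    unfolding traversal_def by (auto simp: Let_def)
  with \<open>T ! k = (i, j)\<close> show ?thesis by auto
qed

lemma traversal_covers_column:
  assumes "traversal m l T" and "j < l"
  shows "\<exists>i. (i, j) \<in> set T"
proof -
  have "T \<noteq> []" "snd (hd T) = 0" "snd (last T) = l - 1"
    using assms(1) unfolding traversal_def by auto
  with assms list_unit_steps_attain[of T snd j] traversal_snd_step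
  show ?thesis by force
qed

lemma finite_sector: "finite (sector x T j)"
proof -
  have "sector x T j = (\<lambda>p. x ! fst p) ` {p \<in> set T. snd p = j}"
    unfolding sector_def by force
  then show ?thesis by simp
qed

lemma sector_nonempty:
  assumes "traversal m l T" and "j < l"
  shows "sector x T j \<noteq> {}"
  using traversal_covers_column[OF assms] unfolding sector_def by blast

lemma sector_subset_set:
  assumes "traversal (length x) l T"
  shows "sector x T j \<subseteq> set x"
  using traversal_in_bounds[OF assms] unfolding sector_def by auto

lemma abs_diff_le_on_iff_extremes:
  fixes S :: "'a :: linordered_idom set"
  assumes "finite S" and "S \<noteq> {}"
  shows "(\<forall>s\<in>S. \<bar>s - c\<bar> \<le> r) \<longleftrightarrow> \<bar>Min S - c\<bar> \<le> r \<and> \<bar>Max S - c\<bar> \<le> r"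
proof
  assume extremes: "\<bar>Min S - c\<bar> \<le> r \<and> \<bar>Max S - c\<bar> \<le> r"
  show "\<forall>s\<in>S. \<bar>s - c\<bar> \<le> r"
  proof
    fix s assume "s \<in> S"
    with assms have "Min S \<le> s" "s \<le> Max S" by simp_all
    with extremes show "\<bar>s - c\<bar> \<le> r" by (simp add: abs_le_iff)
  qed
qed (use assms in simp)

definition trav_cost :: "real list \<Rightarrow> real list \<Rightarrow> (nat \<times> nat) list \<Rightarrow> real" where
  "trav_cost x y T = Max ((\<lambda>(i, j). \<bar>x ! i - y ! j\<bar>) ` set T)"

lemma trav_cost_le_iff:
  assumes "traversal (length x) l T"
  shows "trav_cost x y T \<le> r \<longleftrightarrow> (\<forall>j<l. \<forall>s\<in>sector x T j. \<bar>s - y ! j\<bar> \<le> r)"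
proof -
  have "T \<noteq> []"
    using assms unfolding traversal_def by simp
  then have "trav_cost x y T \<le> r \<longleftrightarrow> (\<forall>(i, j)\<in>set T. \<bar>x ! i - y ! j\<bar> \<le> r)"
    unfolding trav_cost_def by auto
  also have "\<dots> \<longleftrightarrow> (\<forall>j<l. \<forall>s\<in>sector x T j. \<bar>s - y ! j\<bar> \<le> r)"
    using traversal_in_bounds(2)[OF assms] unfolding sector_def by blast
  finally show ?thesis .
qed

lemma inj_on_rank: "inj_on (rank x) (set x)"
proof (rule linorder_inj_onI')
  fix z z' assume "z \<in> set x" "z' \<in> set x" "z < z'"
  then have "{w \<in> set x. w \<le> z} \<subset> {w \<in> set x. w \<le> z'}"
    by force
  then have "card {w \<in> set x. w \<le> z} < card {w \<in> set x. w \<le> z'}"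
    by (rule psubset_card_mono[rotated]) simp
  then show "rank x z \<noteq> rank x z'"
    unfolding rank_def by simp
qed

lemma profile_eq_imp_sector_extremes_eq:
  assumes set_eq: "set x = set x'"
    and T: "traversal (length x) l T" and T': "traversal (length x') l T'"
    and profile_eq: "profile x l T = profile x' l T'" and "j < l"
  shows "Min (sector x T j) = Min (sector x' T' j)"
    and "Max (sector x T j) = Max (sector x' T' j)"
proof -
  let ?S = "sector x T j" and ?S' = "sector x' T' j"
  have "rank x' = rank x"
    using set_eq by (simp add: fun_eq_iff rank_def)
  moreover have "profile x l T ! j = profile x' l T' ! j"
    using profile_eq by simp
  ultimately have ranks: "rank x (Min ?S) = rank x (Min ?S')" "rank x (Max ?S) = rank x (Max ?S')"
    using \<open>j < l\<close> unfolding profile_def by simp_all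
  have "?S \<subseteq> set x" "?S' \<subseteq> set x"
    using sector_subset_set[OF T] sector_subset_set[OF T'] set_eq by simp_all
  moreover have "?S \<noteq> {}" "?S' \<noteq> {}"
    using sector_nonempty[OF T] sector_nonempty[OF T'] \<open>j < l\<close> by simp_all
  ultimately have "Min ?S \<in> set x" "Max ?S \<in> set x" "Min ?S' \<in> set x" "Max ?S' \<in> set x"
    using finite_sector Min_in Max_in by blast+
  with ranks inj_on_rank show "Min ?S = Min ?S'" "Max ?S = Max ?S'"
    by (metis inj_onD)+
qed

lemma trav_cost_eq_if_profile_eq:
  assumes "set x = set x'"
    and T: "traversal (length x) l T" and T': "traversal (length x') l T'"
    and "profile x l T = profile x' l T'"
  shows "trav_cost x y T = trav_cost x' y T'"
proof -
  have "(\<forall>s\<in>sector x T j. \<bar>s - c\<bar> \<le> r) \<longleftrightarrow> (\<forall>s\<in>sector x' T' j. \<bar>s - c\<bar> \<le> r)"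
    if "j < l" for j c r
    using abs_diff_le_on_iff_extremes[OF finite_sector sector_nonempty[OF T that]]
      abs_diff_le_on_iff_extremes[OF finite_sector sector_nonempty[OF T' that]]
      profile_eq_imp_sector_extremes_eq[OF assms that]
    by simp
  then have "trav_cost x y T \<le> r \<longleftrightarrow> trav_cost x' y T' \<le> r" for r
    unfolding trav_cost_le_iff[OF T] trav_cost_le_iff[OF T'] by simp
  then show ?thesis
    by (meson order_antisym order_refl)
qed

lemma trav_costs_subset_if_profiles_eq:
  assumes "set x = set x'" and "profiles x l = profiles x' l"
  shows "{trav_cost x y T | T. traversal (length x) l T}
    \<subseteq> {trav_cost x' y T' | T'. traversal (length x') l T'}"
proof clarify
  fix T assume T: "traversal (length x) l T"
  with assms(2) obtain T' where T': "traversal (length x') l T'"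
    and "profile x l T = profile x' l T'"
    unfolding profiles_def by blast
  then have "trav_cost x y T = trav_cost x' y T'"
    using trav_cost_eq_if_profile_eq[OF assms(1) T] by blast
  with T' show "\<exists>T'. trav_cost x y T = trav_cost x' y T' \<and> traversal (length x') l T'"
    by blast
qed

lemma dF_eq_Min_trav_cost:
  "dF x y = Min {trav_cost x y T | T. traversal (length x) (length y) T}"
  unfolding dF_def trav_cost_def ..

theorem lemma4p4:
  fixes x x' y :: "real list" and l :: nat
  assumes "set x = set x'"
    and "profiles x l = profiles x' l"
    and "length y = l"
  shows "dF x y = dF x' y"
proof -
  have "{trav_cost x y T | T. traversal (length x) l T}
      = {trav_cost x' y T | T. traversal (length x') l T}"
    using trav_costs_subset_if_profiles_eq[OF assms(1,2)]
      trav_costs_subset_if_profiles_eq[OF assms(1,2)[symmetric]] by blast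
  then show ?thesis
    unfolding dF_eq_Min_trav_cost assms(3) by simp
qed

end
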